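(* For $n\ge1$ let $C_n$ be the $n\times n$ lower triangular matrix all of whose entries on and below the diagonal equal $1$, and define $$G(n)=\det\begin{pmatrix}(t-1)I_n & C_n^T\\ tC_n & (t-1)I_n\end{pmatrix}\in\mathbb Z[t],\qquad G(0)=1.$$ (For $n\ge1$, $G(n)$ is the normalized Alexander polynomial of the alternating quasi-rational knot $X_n(2,\dots,2\mid-2,\dots,-2)$.) Then for every $n\ge1$: all zeros of $G(n)$ are real; $G(n)G(n-1)$ has no repeated zeros; the zeros of $G(n)$ and of $(t-1)G(n-1)$ are interlaced; and the largest zero of $G(n)$ is at least $n+1$.
   Context: Interlacing: two real-rooted polynomials with zeros $\alpha_1\le\dots\le\alpha_n$ and $\beta_1\le\dots\le\beta_m$ (with multiplicity) are interlaced if $|m-n|\le1$ and the zeros alternate: if $n=m$, either $\alpha_1\le\beta_1\le\alpha_2\le\dots\le\alpha_n\le\beta_n$ or $\beta_1\le\alpha_1\le\dots\le\beta_n\le\alpha_n$; if $n=m+1$, $\alpha_1\le\beta_1\le\alpha_2\le\dots\le\beta_m\le\alpha_{m+1}$; if $m=n+1$, $\beta_1\le\alpha_1\le\beta_2\le\dots\le\alpha_n\le\beta_{n+1}$. *)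

theory Defs
  imports "Jordan_Normal_Form.Determinant" "HOL-Computational_Algebra.Polynomial" Complex_Main
begin

definition C_mat :: "nat \<Rightarrow> int poly mat" where
  "C_mat n = mat n n (\<lambda>(i,j). if j \<le> i then 1 else 0)"

definition G_mat :: "nat \<Rightarrow> int poly mat" where
  "G_mat n = mat (2*n) (2*n) (\<lambda>(i,j).
     if i < n \<and> j < n then (if i = j then [:-1, 1:] else 0)
     else if i < n \<and> n \<le> j then (C_mat n) $$ (j - n, i)
     else if n \<le> i \<and> j < n then [:0, 1:] * (C_mat n) $$ (i - n, j)
     else (if i = j then [:-1, 1:] else 0))"

definition G :: "nat \<Rightarrow> int poly" where
  "G n = (if n = 0 then 1 else det (G_mat n))"

definition interlace_lists :: "real list \<Rightarrow> real list \<Rightarrow> bool" where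
  "interlace_lists as bs \<longleftrightarrow>
     (length as = length bs \<and> (\<forall>i<length as. as ! i \<le> bs ! i)
        \<and> (\<forall>i. Suc i < length as \<longrightarrow> bs ! i \<le> as ! Suc i))
   \<or> (length as = Suc (length bs) \<and>
        (\<forall>i<length bs. as ! i \<le> bs ! i \<and> bs ! i \<le> as ! Suc i))"

definition interlaced :: "real poly \<Rightarrow> real poly \<Rightarrow> bool" where
  "interlaced p q \<longleftrightarrow> p \<noteq> 0 \<and> q \<noteq> 0 \<and>
     (\<exists>as bs. sorted as \<and> sorted bs
        \<and> p = smult (lead_coeff p) (\<Prod>a\<leftarrow>as. [:-a, 1:])
        \<and> q = smult (lead_coeff q) (\<Prod>b\<leftarrow>bs. [:-b, 1:])
        \<and> (interlace_lists as bs \<or> interlace_lists bs as))"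

end

theory Submission
  imports Defs "Jordan_Normal_Form.Char_Poly"
begin

(*
  Write u = (t-1)^2.  By the Schur complement, G(n) = det (u I - t C^T C).  The
  difference matrix F = C^{-1} (ones on the diagonal, -1 below it) satisfies F^T F = tridiagonal,
  and det F = 1, so conjugating by F turns G(n) into the determinant of a tridiagonal matrix.
  Expanding that determinant gives the three-term recurrence
     D 0 = 1,  D 1 = u - t,  D (m+2) = (2u - t) D (m+1) - u^2 D m,
  and G(n) = D n is monic of degree 2n.  If 4 sin^2(phi) (t-1)^2 = t, then
  D m (t) cos phi = u^m cos ((2m+1) phi); hence for phi_k = (2k+1) pi / (2(2n+1)), k < n, both
  roots rho_k > 1 and 1/rho_k < 1 of t^2 - (2 + 1/(4 sin^2 phi_k)) t + 1 are zeros of G(n).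
  These are 2n distinct reals, so G(n) splits into distinct real linear factors.  Monotonicity
  of the angles phi_k in k and n shows that the zeros of G(n) strictly interlace those of
  (t-1) G(n-1) (whose zeros are those of G(n-1) together with 1); this yields all four claims,
  the last one from the bound sin x <= x applied to the largest zero rho_0.
*)

section \<open>From the block determinant to a three-term recurrence\<close>

definition tridiag :: "nat \<Rightarrow> 'a::comm_ring_1 \<Rightarrow> 'a \<Rightarrow> 'a \<Rightarrow> 'a mat" where
  "tridiag n a b c = mat n n (\<lambda>(i,j). if i = j then (if i = n - 1 then a else b)
      else if i = Suc j \<or> j = Suc i then c else 0)"

lemma tridiag_carrier [simp]: "tridiag n a b c \<in> carrier_mat n n"
  unfolding tridiag_def by auto

lemma tridiag_dims [simp]: "dim_row (tridiag n a b c) = n" "dim_col (tridiag n a b c) = n"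
  unfolding tridiag_def by auto

lemma det_tridiag_0: "det (tridiag 0 a b c) = 1"
  by (simp add: det_def tridiag_def)

lemma det_tridiag_1: "det (tridiag (Suc 0) a b c) = a"
proof -
  have "tridiag (Suc 0) a b c = mat 1 1 (\<lambda>_. a)" by (rule eq_matI) (auto simp: tridiag_def)
  thus ?thesis by (simp add: det_lower_triangular[of 1] diag_mat_def)
qed

lemma det_tridiag_SS:
  "det (tridiag (Suc (Suc n)) a b c) = b * det (tridiag (Suc n) a b c) - c^2 * det (tridiag n a b c)"
proof -
  let ?A = "tridiag (Suc (Suc n)) a b c"
  define B where "B = mat_delete ?A 0 1"
  have minor00: "mat_delete ?A 0 0 = tridiag (Suc n) a b c"
    by (rule eq_matI) (auto simp: tridiag_def mat_delete_def)
  have B_carrier: "B \<in> carrier_mat (Suc n) (Suc n)"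
    unfolding B_def mat_delete_def by (auto simp: tridiag_def)
  have minor_B: "mat_delete B 0 0 = tridiag n a b c"
    by (rule eq_matI) (auto simp: tridiag_def mat_delete_def B_def)
  have "det B = (\<Sum>i<Suc n. B $$ (i,0) * cofactor B i 0)"
    by (rule laplace_expansion_column[OF B_carrier]) auto
  also have "\<dots> = B $$ (0,0) * cofactor B 0 0 + (\<Sum>i<n. B $$ (Suc i,0) * cofactor B (Suc i) 0)"
    by (rule sum.lessThan_Suc_shift)
  also have "(\<Sum>i<n. B $$ (Suc i,0) * cofactor B (Suc i) 0) = 0"
    by (rule sum.neutral) (auto simp: B_def mat_delete_def tridiag_def)
  also have "B $$ (0,0) = c" by (simp add: B_def mat_delete_def tridiag_def)
  finally have det_B: "det B = c * det (tridiag n a b c)"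
    by (simp add: cofactor_def minor_B)
  have "det ?A = (\<Sum>j<Suc (Suc n). ?A $$ (0,j) * cofactor ?A 0 j)"
    by (rule laplace_expansion_row) auto
  also have "\<dots> = ?A $$ (0,0) * cofactor ?A 0 0 + (?A $$ (0,1) * cofactor ?A 0 1
      + (\<Sum>j<n. ?A $$ (0,Suc (Suc j)) * cofactor ?A 0 (Suc (Suc j))))"
    unfolding sum.lessThan_Suc_shift[of _ "Suc n"] sum.lessThan_Suc_shift[of _ n]
    by (simp add: add.assoc)
  also have "(\<Sum>j<n. ?A $$ (0,Suc (Suc j)) * cofactor ?A 0 (Suc (Suc j))) = 0"
    by (rule sum.neutral) (auto simp: tridiag_def)
  also have "?A $$ (0,0) = b" by (simp add: tridiag_def)
  also have "?A $$ (0,1) = c" by (simp add: tridiag_def)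
  finally show ?thesis using det_B unfolding B_def
    by (simp add: cofactor_def minor00 power2_eq_square)
qed

definition diff_mat :: "nat \<Rightarrow> 'a::comm_ring_1 mat" where
  "diff_mat n = mat n n (\<lambda>(i,j). if i = j then 1 else if i = Suc j then -1 else 0)"

lemma diff_mat_carrier [simp]: "diff_mat n \<in> carrier_mat n n"
  unfolding diff_mat_def by auto

lemma C_mat_carrier [simp]: "C_mat n \<in> carrier_mat n n"
  unfolding C_mat_def by auto

lemma diff_mat_dims [simp]: "dim_row (diff_mat n) = n" "dim_col (diff_mat n) = n"
  unfolding diff_mat_def by auto

lemma C_mat_dims [simp]: "dim_row (C_mat n) = n" "dim_col (C_mat n) = n"
  unfolding C_mat_def by auto

lemma diff_mat_entry:
  "i < n \<Longrightarrow> j < n \<Longrightarrow>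
     diff_mat n $$ (i,j) = (if i = j then 1 else 0) - (if i = Suc j then 1 else 0)"
  unfolding diff_mat_def by auto

lemma C_mat_diff_mat: "C_mat n * diff_mat n = 1\<^sub>m n"
proof (rule eq_matI)
  fix i j assume "i < dim_row (1\<^sub>m n :: int poly mat)" "j < dim_col (1\<^sub>m n :: int poly mat)"
  hence i: "i < n" and j: "j < n" by auto
  have "(C_mat n * diff_mat n) $$ (i,j) = (\<Sum>k<n. C_mat n $$ (i,k) * diff_mat n $$ (k,j))"
    using i j by (simp add: scalar_prod_def lessThan_atLeast0)
  also have "\<dots> = (\<Sum>k<n. C_mat n $$ (i,k) *
      ((if k = j then 1 else 0) - (if k = Suc j then 1 else 0)))"
    by (rule sum.cong) (auto simp: diff_mat_entry j)
  also have "\<dots> = (\<Sum>k<n. (if k = j then C_mat n $$ (i,j) else 0))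
      - (\<Sum>k<n. (if k = Suc j then C_mat n $$ (i,Suc j) else 0))"
    by (subst sum_subtractf[symmetric], rule sum.cong) auto
  also have "\<dots> = 1\<^sub>m n $$ (i,j)"
    using i j by (auto simp: C_mat_def)
  finally show "(C_mat n * diff_mat n) $$ (i,j) = 1\<^sub>m n $$ (i,j)" .
qed auto

lemma diff_mat_gram: "transpose_mat (diff_mat n) * diff_mat n = (tridiag n 1 2 (-1) :: 'a::comm_ring_1 mat)"
proof (rule eq_matI)
  fix i j assume "i < dim_row (tridiag n 1 2 (-1) :: 'a mat)" "j < dim_col (tridiag n 1 2 (-1) :: 'a mat)"
  hence i: "i < n" and j: "j < n" by (auto simp: tridiag_def)
  have "(transpose_mat (diff_mat n) * diff_mat n) $$ (i,j)
      = (\<Sum>k<n. diff_mat n $$ (k,i) * diff_mat n $$ (k,j) :: 'a)"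
    using i j by (simp add: scalar_prod_def lessThan_atLeast0)
  also have "\<dots> = (\<Sum>k<n. ((if k = i then 1 else 0) - (if k = Suc i then 1 else 0))
      * ((if k = j then 1 else 0) - (if k = Suc j then 1 else 0)))"
    by (rule sum.cong) (auto simp: diff_mat_entry i j)
  also have "\<dots> = (\<Sum>k<n. (if k = i then (if i = j then 1 else 0) - (if i = Suc j then 1 else 0) else 0))
      + (\<Sum>k<n. (if k = Suc i then (if Suc i = Suc j then 1 else 0) - (if Suc i = j then 1 else 0) else 0))"
    by (subst sum.distrib[symmetric], rule sum.cong) auto
  also have "\<dots> = tridiag n 1 2 (-1) $$ (i,j)"
    using i j by (auto simp: tridiag_def)
  finally show "(transpose_mat (diff_mat n) * diff_mat n) $$ (i,j) = (tridiag n 1 2 (-1) :: 'a mat) $$ (i,j)" .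
qed auto

lemma det_diff_mat: "det (diff_mat n) = 1"
proof -
  have "det (diff_mat n) = prod_list (diag_mat (diff_mat n))"
    by (rule det_lower_triangular[of n]) (auto simp: diff_mat_def)
  also have "diag_mat (diff_mat n) = replicate n 1"
    by (rule nth_equalityI) (auto simp: diag_mat_def diff_mat_def)
  finally show ?thesis by simp
qed

lemma det_congruence:
  fixes A F :: "'a::comm_ring_1 mat"
  assumes "A \<in> carrier_mat n n" "F \<in> carrier_mat n n"
  shows "det (transpose_mat F * A * F) = det F ^ 2 * det A"
proof -
  have "det (transpose_mat F * A * F) = det (transpose_mat F * A) * det F"
    by (rule det_mult[of _ n]) (use assms in auto)
  also have "det (transpose_mat F * A) = det (transpose_mat F) * det A"
    by (rule det_mult[of _ n]) (use assms in auto)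
  finally show ?thesis using det_transpose[OF assms(2)] by (simp add: power2_eq_square)
qed

text \<open>Schur complement: the lower left and lower right blocks of G_mat commute.\<close>
lemma det_G_mat_schur:
  "det (G_mat n) = det (([:-1,1:]^2) \<cdot>\<^sub>m 1\<^sub>m n - [:0,1:] \<cdot>\<^sub>m (transpose_mat (C_mat n) * C_mat n))"
proof -
  let ?a = "[:-1,1:] :: int poly" and ?C = "C_mat n"
  have blocks: "G_mat n = four_block_mat (?a \<cdot>\<^sub>m 1\<^sub>m n) (transpose_mat ?C)
      ([:0,1:] \<cdot>\<^sub>m ?C) (?a \<cdot>\<^sub>m 1\<^sub>m n)"
    by (rule eq_matI) (auto simp: G_mat_def one_pCons)
  have "(?a \<cdot>\<^sub>m 1\<^sub>m n) * (?a \<cdot>\<^sub>m 1\<^sub>m n) = ?a^2 \<cdot>\<^sub>m 1\<^sub>m n"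
    by (rule eq_matI) (auto simp: power2_eq_square)
  moreover have "transpose_mat ?C * ([:0,1:] \<cdot>\<^sub>m ?C) = [:0,1:] \<cdot>\<^sub>m (transpose_mat ?C * ?C)"
    by (rule mult_smult_distrib[of _ n n _ n]) auto
  moreover have "det (G_mat n) = det ((?a \<cdot>\<^sub>m 1\<^sub>m n) * (?a \<cdot>\<^sub>m 1\<^sub>m n)
      - transpose_mat ?C * ([:0,1:] \<cdot>\<^sub>m ?C))"
    unfolding blocks
    by (rule det_four_block_mat[of _ n]) (auto simp: mult_smult_distrib mult_smult_assoc_mat)
  ultimately show ?thesis by simp
qed

text \<open>Conjugating u I - s C^T C by the difference matrix gives a tridiagonal matrix,
  because C F = I and F^T F is the discrete Laplacian.\<close>
lemma diff_mat_congruence: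
  fixes u s :: "int poly" and n :: nat
  defines "X \<equiv> u \<cdot>\<^sub>m 1\<^sub>m n - s \<cdot>\<^sub>m (transpose_mat (C_mat n) * C_mat n)"
  shows "transpose_mat (diff_mat n) * X * diff_mat n = tridiag n (u - s) (2*u - s) (-u)"
proof -
  let ?C = "C_mat n" and ?F = "diff_mat n :: int poly mat"
  have gram_C: "transpose_mat ?F * (transpose_mat ?C * ?C) * ?F = 1\<^sub>m n"
  proof -
    have FT: "transpose_mat ?F \<in> carrier_mat n n" and CT: "transpose_mat ?C \<in> carrier_mat n n"
      by auto
    have "transpose_mat (?C * ?F) * (?C * ?F) = (transpose_mat ?F * transpose_mat ?C) * (?C * ?F)"
      by (simp add: transpose_mult[of _ n n _ n])
    also have "\<dots> = transpose_mat ?F * (transpose_mat ?C * (?C * ?F))"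
      by (rule assoc_mult_mat[OF FT CT]) auto
    also have "transpose_mat ?C * (?C * ?F) = (transpose_mat ?C * ?C) * ?F"
      by (rule assoc_mult_mat[OF CT, symmetric]) auto
    also have "transpose_mat ?F * ((transpose_mat ?C * ?C) * ?F) = transpose_mat ?F * (transpose_mat ?C * ?C) * ?F"
      by (rule assoc_mult_mat[OF FT, symmetric]) auto
    finally show ?thesis by (simp add: C_mat_diff_mat)
  qed
  have "transpose_mat ?F * X = u \<cdot>\<^sub>m (transpose_mat ?F * 1\<^sub>m n)
      - s \<cdot>\<^sub>m (transpose_mat ?F * (transpose_mat ?C * ?C))"
    unfolding X_def
    by (subst mult_minus_distrib_mat[of _ n n]) (auto simp: mult_smult_distrib[of _ n n _ n])
  hence "transpose_mat ?F * X * ?F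
      = (u \<cdot>\<^sub>m (transpose_mat ?F * 1\<^sub>m n) - s \<cdot>\<^sub>m (transpose_mat ?F * (transpose_mat ?C * ?C))) * ?F"
    by simp
  also have "\<dots> = u \<cdot>\<^sub>m (transpose_mat ?F * ?F) - s \<cdot>\<^sub>m (transpose_mat ?F * (transpose_mat ?C * ?C) * ?F)"
    by (subst minus_mult_distrib_mat[of _ n n]) (auto simp: mult_smult_assoc_mat[of _ n n _ n])
  also have "\<dots> = tridiag n (u - s) (2*u - s) (-u)"
    unfolding gram_C diff_mat_gram by (rule eq_matI) (auto simp: tridiag_def)
  finally show ?thesis .
qed

fun D :: "nat \<Rightarrow> 'a::comm_ring_1 poly" where
  "D 0 = 1"
| "D (Suc 0) = [:-1,1:]^2 - [:0,1:]"
| "D (Suc (Suc n)) = (2 * [:-1,1:]^2 - [:0,1:]) * D (Suc n) - [:-1,1:]^4 * D n"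

lemma det_tridiag_D:
  "det (tridiag n ([:-1,1:]^2 - [:0,1:]) (2 * [:-1,1:]^2 - [:0,1:]) (-([:-1,1:]^2))) = D n"
  by (induction n rule: D.induct)
    (simp_all add: det_tridiag_0 det_tridiag_1 det_tridiag_SS flip: power_mult)

lemma G_eq_D: "G n = D n"
proof -
  let ?X = "[:-1,1:]^2 \<cdot>\<^sub>m 1\<^sub>m n - [:0,1:] \<cdot>\<^sub>m (transpose_mat (C_mat n) * C_mat n)"
  have "det (G_mat n) = det ?X" by (rule det_G_mat_schur)
  also have "\<dots> = det (transpose_mat (diff_mat n) * ?X * diff_mat n)"
    by (subst det_congruence[of _ n]) (auto simp: det_diff_mat)
  also have "\<dots> = D n"
    by (simp add: diff_mat_congruence det_tridiag_D)
  finally show ?thesis by (simp add: G_def)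
qed

lemma map_poly_of_int_D: "map_poly (of_int :: int \<Rightarrow> 'a::comm_ring_1) (D n) = D n"
  by (induction n rule: D.induct)
    (simp_all add: hom_distribs)

lemma poly_D_of_real: "poly (D n) (of_real x :: 'a::{real_algebra_1,comm_ring_1}) = of_real (poly (D n) x)"
  by (induction n rule: D.induct) simp_all

lemma monic_diff:
  fixes p q :: "'a::comm_ring_1 poly"
  assumes "degree p \<le> k" "degree q \<le> k" "coeff p k - coeff q k = 1"
  shows "degree (p - q) = k \<and> lead_coeff (p - q) = 1"
proof -
  have top: "coeff (p - q) k = 1" using assms(3) by simp
  have "degree (p - q) \<le> k" using assms(1,2) by (rule degree_diff_le)
  moreover have "k \<le> degree (p - q)" using top by (intro le_degree) simp
  ultimately show ?thesis using top by simp
qed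

lemma D_monic: "degree (D n :: 'a::{idom,ring_char_0} poly) = 2*n \<and> lead_coeff (D n :: 'a poly) = 1"
proof (induction n rule: D.induct)
  case 1
  then show ?case by simp
next
  case 2
  have "(D (Suc 0) :: 'a poly) = [:1,-3,1:]" by (simp add: power2_eq_square)
  then show ?case by simp
next
  case (3 n)
  let ?p = "(2 * [:-1,1:]^2 - [:0,1:]) * D (Suc n) :: 'a poly"
  let ?q = "[:-1,1:]^4 * D n :: 'a poly"
  have factor: "2 * [:-1,1:]^2 - [:0,1:] = ([:2,-5,2:] :: 'a poly)"
    by (simp add: power2_eq_square numeral_poly)
  from 3 have deg1: "degree (D (Suc n) :: 'a poly) = 2 * Suc n"
    and lc1: "lead_coeff (D (Suc n) :: 'a poly) = 1"
    and deg0: "degree (D n :: 'a poly) = 2 * n"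
    and lc0: "lead_coeff (D n :: 'a poly) = 1" by blast+
  have nonzero: "D (Suc n) \<noteq> (0 :: 'a poly)" "D n \<noteq> (0 :: 'a poly)"
    using lc0 lc1 by auto
  have "degree ?p = 2 * Suc (Suc n)"
    unfolding factor by (subst degree_mult_eq) (use nonzero deg1 in auto)
  moreover have "lead_coeff ?p = 2"
    unfolding factor lead_coeff_mult using lc1 by simp
  moreover have "degree ?q = 2 * Suc (Suc n)"
    by (subst degree_mult_eq) (use nonzero deg0 in \<open>auto simp: degree_linear_power\<close>)
  moreover have "lead_coeff ?q = 1"
    unfolding lead_coeff_mult using lc0 by (simp add: lead_coeff_power)
  ultimately show ?case
    unfolding D.simps(3) by (intro monic_diff) simp_all
qed

lemma D_trig:
  fixes t \<phi> :: real
  assumes curve: "4 * (sin \<phi>)^2 * (t-1)^2 = t"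
  shows "poly (D m) t * cos \<phi> = ((t-1)^2)^m * cos ((2*m+1)*\<phi>)"
proof (induction m rule: D.induct)
  case 1
  then show ?case by simp
next
  case 2
  have "cos (3*\<phi>) = 4 * cos \<phi> ^ 3 - 3 * cos \<phi>" by (rule cos_treble_cos)
  also have "\<dots> = cos \<phi> * (1 - 4 * (sin \<phi>)^2)"
    by (simp add: power3_eq_cube power2_eq_square cos_squared_eq[unfolded power2_eq_square]
        algebra_simps)
  finally have cos_3: "cos (3*\<phi>) = cos \<phi> * (1 - 4 * (sin \<phi>)^2)" .
  have "poly (D (Suc 0)) t = (t-1)^2 * (1 - 4*(sin \<phi>)^2)"
    using curve by (simp add: algebra_simps)
  hence "poly (D (Suc 0)) t * cos \<phi> = (t-1)^2 * (cos \<phi> * (1 - 4*(sin \<phi>)^2))"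
    by simp
  also have "\<dots> = (t-1)^2 * cos (3*\<phi>)" using cos_3 by simp
  finally show ?case by simp
next
  case (3 m)
  let ?u = "(t-1)^2"
  have "1 - cos (2*\<phi>) = 2*(sin \<phi>)^2" by (simp add: cos_double_sin)
  hence "2 * ?u * (1 - cos (2*\<phi>)) = 4 * (sin \<phi>)^2 * (t-1)^2" by simp
  hence t_eq: "t = 2 * ?u * (1 - cos (2*\<phi>))" using curve by simp
  have sum_cos: "cos ((2*real m+5)*\<phi>) + cos ((2*real m+1)*\<phi>) = 2 * cos (2*\<phi>) * cos ((2*real m+3)*\<phi>)"
    using cos_add[of "(2*real m+3)*\<phi>" "2*\<phi>"] cos_diff[of "(2*real m+3)*\<phi>" "2*\<phi>"]
    by (simp add: algebra_simps)
  have "poly (D (Suc (Suc m))) t * cos \<phi>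
      = (2*?u - t) * (poly (D (Suc m)) t * cos \<phi>) - ?u^2 * (poly (D m) t * cos \<phi>)"
    by (simp add: algebra_simps power2_eq_square power4_eq_xxxx)
  also have "\<dots> = (2*?u - t) * (?u^(Suc m) * cos ((2*real m+3)*\<phi>)) - ?u^2 * (?u^m * cos ((2*real m+1)*\<phi>))"
    using 3 by (simp add: algebra_simps)
  also have "\<dots> = ?u^(Suc (Suc m)) * (2 * cos (2*\<phi>) * cos ((2*real m+3)*\<phi>) - cos ((2*real m+1)*\<phi>))"
    by (subst t_eq) (simp add: algebra_simps power2_eq_square)
  also have "\<dots> = ?u^(Suc (Suc m)) * cos ((2*real m+5)*\<phi>)" using sum_cos by simp
  finally show ?case by (simp add: algebra_simps)
qed

section \<open>Products of distinct linear factors and strict interlacing\<close>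

lemma monic_vanishing_prod:
  fixes p :: "'a::idom poly"
  assumes "finite S" "degree p = card S" "lead_coeff p = 1" "\<forall>x\<in>S. poly p x = 0"
  shows "p = (\<Prod>x\<in>S. [:-x,1:])"
  using assms
proof (induction S arbitrary: p rule: finite_induct)
  case empty
  then show ?case using monic_degree_0[of p] by simp
next
  case (insert a S p)
  have "poly p a = 0" using insert by simp
  then obtain q where p: "p = [:-a,1:] * q" by (auto simp: poly_eq_0_iff_dvd)
  have "p \<noteq> 0" using insert.prems(2) by auto
  hence "q \<noteq> 0" using p by auto
  hence "degree ([:-a,1:] * q) = degree [:-a,1:] + degree q" by (intro degree_mult_eq) auto
  hence "degree q = card S" using p insert by simp
  moreover have "lead_coeff ([:-a,1:] * q) = lead_coeff [:-a,1:] * lead_coeff q"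
    by (rule lead_coeff_mult)
  hence "lead_coeff q = 1" using p insert.prems(2) by simp
  moreover have "\<forall>x\<in>S. poly q x = 0" using p insert by auto
  ultimately have "q = (\<Prod>x\<in>S. [:-x,1:])" by (rule insert.IH)
  thus ?case using p insert by simp
qed

lemma order_prod_linear:
  fixes a :: "'a::idom"
  assumes "finite S"
  shows "order a (\<Prod>x\<in>S. [:-x,1:]) = (if a \<in> S then 1 else 0)"
  using assms
proof (induction S rule: finite_induct)
  case empty
  then show ?case by simp
next
  case (insert b S)
  have "(\<Prod>x\<in>S. [:-x,1:]) \<noteq> (0 :: 'a poly)" using insert by simp
  hence "[:-b,1:] * (\<Prod>x\<in>S. [:-x,1:]) \<noteq> 0" by (intro no_zero_divisors) simp_all
  hence "order a ([:-b,1:] * (\<Prod>x\<in>S. [:-x,1:])) = order a [:-b,1:] + order a (\<Prod>x\<in>S. [:-x,1:])"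
    by (rule order_mult)
  moreover have "order a [:-b,1:] = (if a = b then 1 else 0)"
    using order_power_n_n[of a 1] by (auto intro: order_0I)
  ultimately show ?case using insert by auto
qed

lemma rsquarefree_prod_linear: "finite S \<Longrightarrow> rsquarefree (\<Prod>x\<in>S. [:-x,1:] :: 'a::idom poly)"
  unfolding rsquarefree_def by (simp add: order_prod_linear)

lemma interlaced_prod_linear:
  fixes as bs :: "real list"
  assumes "sorted_wrt (<) as" "sorted_wrt (<) bs" "interlace_lists as bs"
  shows "interlaced (\<Prod>x\<in>set as. [:-x,1:]) (\<Prod>x\<in>set bs. [:-x,1:])"
proof -
  have factor: "(\<Prod>x\<in>set xs. [:-x,1:]) \<noteq> 0 \<and>
      (\<Prod>x\<in>set xs. [:-x,1:]) = smult (lead_coeff (\<Prod>x\<in>set xs. [:-x,1:])) (\<Prod>x\<leftarrow>xs. [:-x,1:])"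
    if "sorted_wrt (<) xs" for xs :: "real list"
  proof -
    have "lead_coeff (\<Prod>x\<in>set xs. [:-x,1:]) = 1" by (simp add: lead_coeff_prod)
    moreover have "(\<Prod>x\<in>set xs. [:-x,1:]) = (\<Prod>x\<leftarrow>xs. [:-x,1:])"
      using that by (simp add: strict_sorted_iff prod.distinct_set_conv_list)
    ultimately show ?thesis by auto
  qed
  have "sorted as" "sorted bs" using assms(1,2) by (simp_all add: strict_sorted_iff)
  thus ?thesis using factor[OF assms(1)] factor[OF assms(2)] assms(3)
    unfolding interlaced_def by blast
qed

lemma strict_interlacing:
  fixes as bs :: "real list"
  assumes as: "sorted_wrt (<) as" and len: "length as = Suc (length bs)"
    and between: "\<And>i. i < length bs \<Longrightarrow> as ! i < bs ! i \<and> bs ! i < as ! Suc i"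
  shows "sorted_wrt (<) bs" "set as \<inter> set bs = {}" "interlace_lists as bs"
proof -
  have mono: "as ! i \<le> as ! j" if "i \<le> j" "j < length as" for i j
    using as that by (simp add: strict_sorted_iff sorted_nth_mono)
  show "sorted_wrt (<) bs"
  proof (unfold sorted_wrt_iff_nth_less, intro allI impI)
    fix i j assume "i < j" "j < length bs"
    hence "bs ! i < as ! Suc i" "as ! Suc i \<le> as ! j" "as ! j < bs ! j"
      using between[of i] between[of j] mono[of "Suc i" j] len by auto
    thus "bs ! i < bs ! j" by linarith
  qed
  show "set as \<inter> set bs = {}"
  proof (rule ccontr)
    assume "set as \<inter> set bs \<noteq> {}"
    then obtain x where "x \<in> set as" "x \<in> set bs" by blast
    then obtain i j where ij: "i < length as" "j < length bs" "as ! i = bs ! j"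
      by (metis in_set_conv_nth)
    show False
    proof (cases "i \<le> j")
      case True
      then show ?thesis using ij mono[of i j] between[of j] len by auto
    next
      case False
      then show ?thesis using ij mono[of "Suc j" i] between[of j] by auto
    qed
  qed
  show "interlace_lists as bs"
    unfolding interlace_lists_def using len between by (auto intro: less_imp_le)
qed

section \<open>The zeros of G(n)\<close>

text \<open>For k < N the angle phi N k lies in (0, pi/2) and cos ((2N+1) phi N k) = 0.  Each such
  angle contributes the two roots rho (lam N k) > 1 and 1 / rho (lam N k) < 1 of
  t^2 - (2 + lam N k) t + 1.\<close>
definition phi :: "nat \<Rightarrow> nat \<Rightarrow> real" where
  "phi N k = (2*real k+1)*pi/(2*(2*real N+1))"

definition lam :: "nat \<Rightarrow> nat \<Rightarrow> real" where
  "lam N k = 1/(4*(sin (phi N k))^2)"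

definition rho :: "real \<Rightarrow> real" where
  "rho l = (2 + l + sqrt (l^2+4*l))/2"

text \<open>The i-th smallest zero of G(N), for i < 2N.\<close>
definition alpha :: "nat \<Rightarrow> nat \<Rightarrow> real" where
  "alpha N i = (if i < N then 1/rho (lam N i) else rho (lam N (2*N-1-i)))"

lemma phi_pos: "0 < phi N k"
  unfolding phi_def by (intro divide_pos_pos mult_pos_pos) auto

lemma phi_less_pi_half: "k < N \<Longrightarrow> phi N k < pi/2"
  unfolding phi_def by (simp add: field_simps)

lemma phi_less:
  assumes "(2*real k+1) * (2*real N'+1) < (2*real k'+1) * (2*real N+1)"
  shows "phi N k < phi N' k'"
proof -
  have "(2*real k+1) * (2*real N'+1) * pi < (2*real k'+1) * (2*real N+1) * pi"
    using assms by simp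
  thus ?thesis unfolding phi_def by (simp add: field_simps)
qed

lemma cos_phi_odd_multiple: "cos ((2*real N+1) * phi N k) = 0"
proof -
  have "(2*real N+1) * phi N k = real_of_int (int (2*k+1)) * (pi/2)"
    unfolding phi_def by (simp add: field_simps)
  thus ?thesis by (subst cos_zero_iff_int) (auto intro!: exI[of _ "int (2*k+1)"])
qed

lemma sin_phi_pos: "k < N \<Longrightarrow> 0 < sin (phi N k)"
  using phi_pos[of N k] phi_less_pi_half[of k N] by (intro sin_gt_zero) auto

lemma lam_pos: "k < N \<Longrightarrow> 0 < lam N k"
  using sin_phi_pos[of k N] unfolding lam_def by simp

lemma lam_less:
  assumes "k < N" "k' < N'" "phi N k < phi N' k'"
  shows "lam N' k' < lam N k"
proof -
  have "0 < sin (phi N k)" "0 < sin (phi N' k')" using sin_phi_pos assms by auto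
  moreover have "sin (phi N k) < sin (phi N' k')"
    using assms phi_pos[of N k] phi_less_pi_half[of k' N'] by (intro sin_monotone_2pi) auto
  ultimately show ?thesis
    unfolding lam_def by (intro divide_strict_left_mono mult_strict_left_mono power_strict_mono) auto
qed

lemma lam_decreasing: "k < k' \<Longrightarrow> k' < N \<Longrightarrow> lam N k' < lam N k"
  by (intro lam_less phi_less) (auto intro!: mult_strict_right_mono)

lemma lam_separation:
  assumes "Suc j < N"
  shows "lam N (Suc j) < lam (N-1) j" "lam (N-1) j < lam N j"
proof -
  have N1: "real (N-1) = real N - 1" using assms by auto
  show "lam N (Suc j) < lam (N-1) j"
    using assms by (intro lam_less phi_less) (auto simp: N1 algebra_simps)
  show "lam (N-1) j < lam N j"
    using assms by (intro lam_less phi_less) (auto simp: N1 intro!: mult_strict_left_mono)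
qed

lemma rho_gt_1: "0 < l \<Longrightarrow> 1 < rho l"
  unfolding rho_def by (simp add: add_pos_nonneg)

lemma rho_less:
  assumes "0 \<le> l" "l < l'"
  shows "rho l < rho l'"
proof -
  have "l^2 \<le> l'^2" using power_mono[of l l' 2] assms by simp
  hence "l^2 + 4*l \<le> l'^2 + 4*l'" using assms by linarith
  hence "sqrt (l^2 + 4*l) \<le> sqrt (l'^2 + 4*l')" by (rule real_sqrt_le_mono)
  hence "2 + l + sqrt (l^2 + 4*l) < 2 + l' + sqrt (l'^2 + 4*l')" using assms(2) by linarith
  thus ?thesis unfolding rho_def by (simp add: divide_strict_right_mono)
qed

lemma inv_rho_less: "0 < l \<Longrightarrow> l < l' \<Longrightarrow> 1/rho l' < 1/rho l"
  using rho_less[of l l'] rho_gt_1[of l] by (simp add: divide_strict_left_mono)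

lemma rho_quadratic: "0 \<le> l \<Longrightarrow> (rho l)^2 - (2+l) * rho l + 1 = 0"
proof -
  assume "0 \<le> l"
  hence "(sqrt (l^2+4*l))^2 = l^2+4*l" by simp
  thus ?thesis unfolding rho_def by (simp add: field_simps power2_eq_square)
qed

lemma inv_rho_quadratic: "0 < l \<Longrightarrow> (1/rho l)^2 - (2+l) * (1/rho l) + 1 = 0"
proof -
  assume l: "0 < l"
  hence "rho l \<noteq> 0" using rho_gt_1 by fastforce
  hence "(1/rho l)^2 - (2+l) * (1/rho l) + 1 = ((rho l)^2 - (2+l) * rho l + 1) / (rho l)^2"
    by (simp add: field_simps power2_eq_square)
  thus ?thesis using rho_quadratic l by simp
qed

text \<open>Every root of t^2 - (2 + lam N k) t + 1 lies on the curve of D_trig and is a zero of D N.\<close>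
lemma D_vanishes:
  assumes k: "k < N" and t: "t^2 - (2 + lam N k)*t + 1 = 0"
  shows "poly (D N) t = 0"
proof -
  have "(t-1)^2 = lam N k * t" using t by (simp add: algebra_simps power2_eq_square)
  hence "4 * (sin (phi N k))^2 * (t-1)^2 = t"
    using sin_phi_pos[OF k] unfolding lam_def by (simp add: field_simps)
  hence "poly (D N) t * cos (phi N k) = 0"
    by (simp add: D_trig cos_phi_odd_multiple)
  moreover have "cos (phi N k) > 0"
    using phi_pos[of N k] phi_less_pi_half[OF k] by (intro cos_gt_zero) auto
  ultimately show ?thesis by simp
qed

lemma alpha_zero: "i < 2*N \<Longrightarrow> poly (D N) (alpha N i) = 0"
  unfolding alpha_def
  by (auto intro!: D_vanishes rho_quadratic inv_rho_quadratic lam_pos less_imp_le)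

lemma alpha_less: assumes "i < j" "j < 2*N" shows "alpha N i < alpha N j"
proof -
  consider "j < N" | "i < N" "N \<le> j" | "N \<le> i" by linarith
  then show ?thesis
  proof cases
    case 1
    then show ?thesis using assms unfolding alpha_def
      by (auto intro!: inv_rho_less lam_pos lam_decreasing)
  next
    case 2
    then have "1 < rho (lam N i)" "1 < rho (lam N (2*N-1-j))"
      using assms rho_gt_1 lam_pos by auto
    moreover have "1/rho (lam N i) < 1" using calculation(1) by simp
    ultimately have "1/rho (lam N i) < rho (lam N (2*N-1-j))" by linarith
    then show ?thesis using 2 unfolding alpha_def by simp
  next
    case 3
    then show ?thesis using assms unfolding alpha_def
      by (auto intro!: rho_less lam_decreasing less_imp_le lam_pos)
  qed
qed

text \<open>The zeros of G(N) in increasing order, and those of (t-1) G(N-1): the zeros of G(N-1)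
  with 1 inserted in the middle.\<close>
definition zeros :: "nat \<Rightarrow> real list" where
  "zeros N = map (alpha N) [0..<2*N]"

definition zeros_prev :: "nat \<Rightarrow> real list" where
  "zeros_prev N = take (N-1) (zeros (N-1)) @ 1 # drop (N-1) (zeros (N-1))"

lemma length_zeros [simp]: "length (zeros N) = 2*N"
  by (simp add: zeros_def)

lemma nth_zeros [simp]: "i < 2*N \<Longrightarrow> zeros N ! i = alpha N i"
  by (simp add: zeros_def)

lemma zeros_sorted: "sorted_wrt (<) (zeros N)"
  by (simp add: sorted_wrt_iff_nth_less alpha_less)

lemma set_zeros_prev: "set (zeros_prev N) = insert 1 (set (zeros (N-1)))"
proof -
  have "set (zeros (N-1)) = set (take (N-1) (zeros (N-1))) \<union> set (drop (N-1) (zeros (N-1)))"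
    by (metis append_take_drop_id set_append)
  thus ?thesis by (auto simp: zeros_prev_def)
qed

lemma length_zeros_prev [simp]: "1 \<le> N \<Longrightarrow> length (zeros_prev N) = 2*N - 1"
  by (simp add: zeros_prev_def)

lemma nth_zeros_prev:
  assumes "1 \<le> N" "i < 2*N - 1"
  shows "zeros_prev N ! i =
    (if i < N-1 then alpha (N-1) i else if i = N-1 then 1 else alpha (N-1) (i-1))"
  using assms by (auto simp: zeros_prev_def nth_append min_def nth_Cons')

lemma zeros_interlace:
  assumes N: "1 \<le> N" and i: "i < 2*N - 1"
  shows "alpha N i < zeros_prev N ! i \<and> zeros_prev N ! i < alpha N (Suc i)"
proof -
  consider "i < N-1" | "i = N-1" | "N \<le> i" by linarith
  then show ?thesis
  proof cases
    case 1
    hence j: "Suc i < N" by auto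
    have pos: "0 < lam N (Suc i)" "0 < lam (N-1) i" using lam_pos j by auto
    have "alpha N i = 1/rho (lam N i)" "zeros_prev N ! i = 1/rho (lam (N-1) i)"
      "alpha N (Suc i) = 1/rho (lam N (Suc i))"
      using 1 j N i by (simp_all add: nth_zeros_prev alpha_def)
    thus ?thesis using inv_rho_less[OF pos(2) lam_separation(2)[OF j]]
      inv_rho_less[OF pos(1) lam_separation(1)[OF j]] by simp
  next
    case 2
    have pos: "0 < lam N (N-1)" using lam_pos N by auto
    have "2*N - 1 - N = N - 1" by auto
    hence "alpha N i = 1/rho (lam N (N-1))" "zeros_prev N ! i = 1"
      "alpha N (Suc i) = rho (lam N (N-1))"
      using 2 N i by (simp_all add: nth_zeros_prev alpha_def)
    thus ?thesis using rho_gt_1[OF pos] by simp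
  next
    case 3
    define j where "j = 2*N-2-i"
    have j: "Suc j < N" using 3 i unfolding j_def by auto
    have pos: "0 < lam N (Suc j)" "0 < lam (N-1) j" using lam_pos j by auto
    have idx: "2*N-1-i = Suc j" "2*N-1-Suc i = j" "2*(N-1)-1-(i-1) = j"
      using 3 i unfolding j_def by auto
    have not_less: "\<not> i < N" "\<not> Suc i < N" "\<not> i - 1 < N - 1" "\<not> i < N - 1" "i \<noteq> N - 1"
      using 3 N by auto
    have "zeros_prev N ! i = alpha (N-1) (i-1)"
      by (simp only: nth_zeros_prev[OF N i] if_not_P[OF not_less(4)] if_not_P[OF not_less(5)])
    also have "\<dots> = rho (lam (N-1) j)"
      by (simp only: alpha_def if_not_P[OF not_less(3)] idx(3))
    finally have "alpha N i = rho (lam N (Suc j))" "zeros_prev N ! i = rho (lam (N-1) j)"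
      "alpha N (Suc i) = rho (lam N j)"
      by (simp_all only: alpha_def if_not_P[OF not_less(1)] if_not_P[OF not_less(2)] idx)
    thus ?thesis using rho_less[of "lam N (Suc j)" "lam (N-1) j"] rho_less[of "lam (N-1) j" "lam N j"]
      lam_separation[OF j] pos by simp
  qed
qed

lemma zeros_strictly_interlace:
  assumes "1 \<le> N"
  shows "sorted_wrt (<) (zeros_prev N)" "set (zeros N) \<inter> set (zeros_prev N) = {}"
    "interlace_lists (zeros N) (zeros_prev N)"
  using strict_interlacing[OF zeros_sorted[of N], where bs = "zeros_prev N"] zeros_interlace[OF assms] assms
  by simp_all

lemma G_factor:
  "map_poly (of_int :: int \<Rightarrow> 'a::{idom,real_algebra_1}) (G N) = (\<Prod>x\<in>set (zeros N). [:-of_real x,1:])"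
proof -
  let ?S = "of_real ` set (zeros N) :: 'a set"
  have inj: "inj_on (of_real :: real \<Rightarrow> 'a) (set (zeros N))" by (simp add: inj_on_def)
  have "distinct (zeros N)" using zeros_sorted strict_sorted_iff by blast
  hence "card ?S = 2*N" by (simp add: card_image[OF inj] distinct_card)
  hence "map_poly of_int (G N) = (\<Prod>y\<in>?S. [:-y,1:] :: 'a poly)"
    using D_monic[where 'a='a, of N]
    by (intro monic_vanishing_prod)
      (auto simp: G_eq_D map_poly_of_int_D poly_D_of_real zeros_def alpha_zero)
  also have "\<dots> = (\<Prod>x\<in>set (zeros N). [:-of_real x,1:])"
    by (simp add: prod.reindex[OF inj])
  finally show ?thesis .
qed

lemma shifted_G_factor:
  assumes "1 \<le> N"
  shows "map_poly (of_int :: int \<Rightarrow> 'a::{idom,real_algebra_1}) ([:-1,1:] * G (N-1))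
    = (\<Prod>x\<in>set (zeros_prev N). [:-of_real x,1:])"
proof -
  have "distinct (zeros_prev N)"
    using zeros_strictly_interlace(1)[OF assms] by (simp add: strict_sorted_iff)
  hence "1 \<notin> set (take (N-1) (zeros (N-1))) \<union> set (drop (N-1) (zeros (N-1)))"
    by (auto simp: zeros_prev_def)
  hence new_zero: "1 \<notin> set (zeros (N-1))" by (metis append_take_drop_id set_append)
  have linear: "map_poly (of_int :: int \<Rightarrow> 'a) [:-1,1:] = [:-of_real 1,1:]" by simp
  have "map_poly (of_int :: int \<Rightarrow> 'a) ([:-1,1:] * G (N-1))
      = [:-of_real 1,1:] * (\<Prod>x\<in>set (zeros (N-1)). [:-of_real x,1:])"
    by (simp only: of_int_poly_hom.hom_mult G_factor linear)
  also have "\<dots> = (\<Prod>x\<in>set (zeros_prev N). [:-of_real x,1:])"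
    using new_zero by (simp add: set_zeros_prev)
  finally show ?thesis .
qed

lemma rho_lower_bound:
  assumes "0 \<le> l" "1 \<le> T" "(T-1)^2 \<le> T*l"
  shows "T \<le> rho l"
proof (cases "2*T-2-l \<le> 0")
  case True
  have "0 \<le> sqrt (l^2+4*l)" using assms(1) by simp
  hence "2*T \<le> 2 + l + sqrt (l^2+4*l)" using True by linarith
  thus ?thesis unfolding rho_def by simp
next
  case False
  have "(2*T-2-l)^2 = l^2 + 4*((T-1)^2 - T*l) + 4*l" by (simp add: algebra_simps power2_eq_square)
  also have "\<dots> \<le> l^2 + 4*l" using assms by simp
  finally have "2*T-2-l \<le> sqrt (l^2+4*l)" by (rule real_le_rsqrt)
  thus ?thesis unfolding rho_def by simp
qed

text \<open>The largest zero rho (lam N 0) of G(N) is at least N+1: since sin x \<le> x and pi < 4,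
  lam N 0 \<ge> (2N+1)^2/16, which exceeds N^2/(N+1).\<close>
lemma largest_zero_bound:
  assumes "1 \<le> N"
  shows "real N + 1 \<le> rho (lam N 0)"
proof -
  let ?p = "phi N 0"
  have sin_pos: "0 < sin ?p" using sin_phi_pos assms by auto
  have "(sin ?p)^2 \<le> ?p^2"
    using sin_pos sin_x_le_x[of ?p] phi_pos[of N 0] by (intro power_mono) auto
  also have "?p^2 = pi^2/(4*(2*real N+1)^2)"
    unfolding phi_def by (simp add: power2_eq_square field_simps)
  also have "\<dots> \<le> 4^2/(4*(2*real N+1)^2)"
    using pi_less_4 by (intro divide_right_mono power_mono) auto
  finally have "4 * (sin ?p)^2 \<le> 16/(2*real N+1)^2" by simp
  hence lam_bound: "(2*real N+1)^2/16 \<le> lam N 0"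
    using sin_pos divide_left_mono[of "4*(sin ?p)^2" "16/(2*real N+1)^2" 1]
    unfolding lam_def by simp
  have "(2*real N+1)^2*(real N+1) - 16*(real N)^2 = real N * (4*(real N - 1)^2 + 1) + 1"
    by (simp add: algebra_simps power2_eq_square)
  hence "16*(real N)^2 \<le> (2*real N+1)^2*(real N+1)"
    by (smt (verit) of_nat_0_le_iff mult_nonneg_nonneg zero_le_power2)
  hence "(real N + 1 - 1)^2 \<le> (real N + 1) * ((2*real N+1)^2/16)"
    by (simp add: field_simps)
  also have "\<dots> \<le> (real N + 1) * lam N 0"
    using lam_bound by (intro mult_left_mono) auto
  finally show ?thesis
    using lam_pos[of 0 N] assms by (intro rho_lower_bound) auto
qed

lemma G_real_rooted:
  fixes z :: complex
  assumes "poly (map_poly of_int (G n)) z = 0"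
  shows "z \<in> \<real>"
proof -
  have "(\<Prod>x\<in>set (zeros n). z - of_real x) = 0"
    using assms by (simp add: G_factor poly_prod)
  then obtain x where "z = of_real x" by auto
  thus ?thesis by simp
qed

text \<open>G(n) G(n-1) has only simple zeros: both factor into distinct linear factors with
  disjoint sets of zeros.\<close>
lemma G_rsquarefree:
  assumes "1 \<le> n"
  shows "rsquarefree (map_poly (of_int :: int \<Rightarrow> complex) (G n * G (n - 1)))"
proof -
  let ?S = "set (zeros n) \<union> set (zeros (n-1))"
  have "set (zeros n) \<inter> set (zeros (n-1)) = {}"
    using zeros_strictly_interlace(2)[OF assms] set_zeros_prev[of n] by blast
  hence "map_poly (of_int :: int \<Rightarrow> complex) (G n * G (n - 1)) = (\<Prod>x\<in>?S. [:-of_real x,1:])"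
    by (simp add: of_int_poly_hom.hom_mult G_factor prod.union_disjoint)
  also have "\<dots> = (\<Prod>y\<in>of_real ` ?S. [:-y,1:])"
    by (simp add: prod.reindex inj_on_def)
  finally show ?thesis by (simp add: rsquarefree_prod_linear)
qed

lemma G_interlaced:
  assumes "1 \<le> n"
  shows "interlaced (map_poly of_int (G n)) (map_poly of_int ([:-1, 1:] * G (n - 1)))"
  using interlaced_prod_linear[OF zeros_sorted zeros_strictly_interlace(1,3)[OF assms]]
  unfolding G_factor shifted_G_factor[OF assms] by simp

lemma G_large_zero:
  assumes "1 \<le> n"
  shows "\<exists>x::real. poly (map_poly of_int (G n)) x = 0 \<and> x \<ge> real n + 1"
proof
  have "\<not> 2*n - 1 < n" using assms by simp
  hence "alpha n (2*n-1) = rho (lam n 0)" by (simp add: alpha_def)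
  moreover have "poly (D n) (alpha n (2*n-1)) = 0" using assms by (intro alpha_zero) simp
  ultimately show "poly (map_poly of_int (G n)) (rho (lam n 0)) = 0 \<and> rho (lam n 0) \<ge> real n + 1"
    using largest_zero_bound[OF assms] by (simp add: G_eq_D map_poly_of_int_D)
qed

theorem theorem10p1:
  fixes n :: nat
  assumes "n \<ge> 1"
  shows "(\<forall>z::complex. poly (map_poly of_int (G n)) z = 0 \<longrightarrow> z \<in> \<real>)
       \<and> rsquarefree (map_poly (of_int :: int \<Rightarrow> complex) (G n * G (n - 1)))
       \<and> interlaced (map_poly of_int (G n)) (map_poly of_int ([:-1, 1:] * G (n - 1)))
       \<and> (\<exists>x::real. poly (map_poly of_int (G n)) x = 0 \<and> x \<ge> real n + 1)"
  using G_real_rooted G_rsquarefree[OF assms] G_interlaced[OF assms] G_large_zero[OF assms]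
  by blast

end
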